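(* Let $X,Y$ be triangulable spaces, $f:X\to Y$ a homeomorphism, $k\in\mathbb{Z}$, and $\vec\varphi:X\to\mathbb{R}^n$, $\vec\psi:Y\to\mathbb{R}^n$ continuous functions with $\max_{x\in X}\|\vec\varphi(x)-\vec\psi(f(x))\|_\infty\le h$. Setting $\vec h=(h,\dots,h)$, for every $(\vec u,\vec v)\in\Delta^+$ we have $\rho_{(X,\vec\varphi),k}(\vec u-\vec h,\vec v+\vec h)\le\rho_{(Y,\vec\psi),k}(\vec u,\vec v)$.
   Context: A triangulable space is a space homeomorphic to the underlying space of a finite simplicial complex. $\|\cdot\|_\infty$ is the max-norm on $\mathbb{R}^n$. For $\vec u,\vec v\in\mathbb{R}^n$, $\vec u\preceq\vec v$ (resp. $\prec$) means $u_i\le v_i$ (resp. $u_i<v_i$) for all $i$; $\Delta^+=\{(\vec u,\vec v):\vec u\prec\vec v\}$. $X\langle\vec\varphi\preceq\vec u\rangle=\{x\in X:\varphi_i(x)\le u_i\ \forall i\}$. Homology is Čech homology with coefficients in a field. For $\vec u\prec\vec v$, $\rho_{(X,\vec\varphi),k}(\vec u,\vec v)$ is the rank of the map $\check H_k(X\langle\vec\varphi\preceq\vec u\rangle)\to\check H_k(X\langle\vec\varphi\preceq\vec v\rangle)$ induced by inclusion. *)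

theory Defs
  imports "HOL-Analysis.Analysis" "HOL-Library.Extended_Nat"
begin

definition finite_simplicial_complex :: "nat set set \<Rightarrow> bool" where
  "finite_simplicial_complex K \<longleftrightarrow> finite K \<and> (\<forall>\<sigma>\<in>K. finite \<sigma> \<and> \<sigma> \<noteq> {}) \<and>
     (\<forall>\<sigma>\<in>K. \<forall>\<tau>. \<tau> \<subseteq> \<sigma> \<and> \<tau> \<noteq> {} \<longrightarrow> \<tau> \<in> K)"

text \<open>Underlying space (geometric realization) in barycentric coordinates, as a
subspace of the product space nat => real.\<close>
definition realization :: "nat set set \<Rightarrow> (nat \<Rightarrow> real) set" where
  "realization K = {t. (\<forall>i. t i \<ge> 0) \<and> {i. t i \<noteq> 0} \<in> K \<and> sum t {i. t i \<noteq> 0} = 1}"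

definition triangulable :: "'a topology \<Rightarrow> bool" where
  "triangulable X \<longleftrightarrow> (\<exists>K. finite_simplicial_complex K \<and>
     X homeomorphic_space subtopology (euclidean :: (nat \<Rightarrow> real) topology) (realization K))"

definition open_cover :: "'a topology \<Rightarrow> 'a set list \<Rightarrow> bool" where
  "open_cover S U \<longleftrightarrow> (\<forall>W\<in>set U. openin S W) \<and> topspace S \<subseteq> \<Union>(set U)"

definition nerve_simplices :: "'a topology \<Rightarrow> 'a set list \<Rightarrow> int \<Rightarrow> nat list set" where
  "nerve_simplices S U k = {\<sigma>. \<sigma> \<noteq> [] \<and> int (length \<sigma>) = k + 1 \<and> (\<forall>i\<in>set \<sigma>. i < length U) \<and>
      topspace S \<inter> (\<Inter>i\<in>set \<sigma>. U ! i) \<noteq> {}}"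

definition chains :: "'a topology \<Rightarrow> 'a set list \<Rightarrow> int \<Rightarrow> (nat list \<Rightarrow> 'k::field) set" where
  "chains S U k = {c. \<forall>\<sigma>. \<sigma> \<notin> nerve_simplices S U k \<longrightarrow> c \<sigma> = 0}"

definition del_nth :: "nat \<Rightarrow> 'b list \<Rightarrow> 'b list" where
  "del_nth i xs = take i xs @ drop (Suc i) xs"

definition boundary :: "'a topology \<Rightarrow> 'a set list \<Rightarrow> int \<Rightarrow> (nat list \<Rightarrow> 'k::field) \<Rightarrow> (nat list \<Rightarrow> 'k)" where
  "boundary S U k c = (\<lambda>\<tau>. if \<tau> \<in> nerve_simplices S U (k - 1) then
      (\<Sum>(\<sigma>, i)\<in>{(\<sigma>, i). \<sigma> \<in> nerve_simplices S U k \<and> i < length \<sigma> \<and> del_nth i \<sigma> = \<tau>}.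
         (-1) ^ i * c \<sigma>) else 0)"

definition cycles :: "'a topology \<Rightarrow> 'a set list \<Rightarrow> int \<Rightarrow> (nat list \<Rightarrow> 'k::field) set" where
  "cycles S U k = {c \<in> chains S U k. boundary S U k c = (\<lambda>_. 0)}"

definition boundaries :: "'a topology \<Rightarrow> 'a set list \<Rightarrow> int \<Rightarrow> (nat list \<Rightarrow> 'k::field) set" where
  "boundaries S U k = boundary S U (k + 1) ` chains S U (k + 1)"

definition refines_via :: "'a set list \<Rightarrow> 'a set list \<Rightarrow> (nat \<Rightarrow> nat) \<Rightarrow> bool" where
  "refines_via V U g \<longleftrightarrow> (\<forall>j<length V. g j < length U \<and> V ! j \<subseteq> U ! g j)"

definition chain_map :: "'a topology \<Rightarrow> 'a set list \<Rightarrow> int \<Rightarrow> (nat \<Rightarrow> nat) \<Rightarrow> (nat list \<Rightarrow> 'k::field) \<Rightarrow> (nat list \<Rightarrow> 'k)" where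
  "chain_map S V k g c = (\<lambda>\<tau>. \<Sum>\<sigma>\<in>{\<sigma> \<in> nerve_simplices S V k. map g \<sigma> = \<tau>}. c \<sigma>)"

text \<open>An element of the Cech homology group (inverse limit over covers) is represented by a
family of cycles, one per finite open cover, compatible under refinement up to boundaries.\<close>
definition cech_elements :: "'a topology \<Rightarrow> int \<Rightarrow> ('a set list \<Rightarrow> nat list \<Rightarrow> 'k::field) set" where
  "cech_elements S k = {z. (\<forall>U. open_cover S U \<longrightarrow> z U \<in> cycles S U k) \<and>
      (\<forall>U V g. open_cover S U \<and> open_cover S V \<and> refines_via V U g \<longrightarrow>
          (\<lambda>\<tau>. chain_map S V k g (z V) \<tau> - z U \<tau>) \<in> boundaries S U k)}"

definition cech_zero :: "'a topology \<Rightarrow> int \<Rightarrow> ('a set list \<Rightarrow> nat list \<Rightarrow> 'k::field) \<Rightarrow> bool" where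
  "cech_zero S k z \<longleftrightarrow> (\<forall>U. open_cover S U \<longrightarrow> z U \<in> boundaries S U k)"

definition cech_lin_indep :: "'a topology \<Rightarrow> int \<Rightarrow> ('a set list \<Rightarrow> nat list \<Rightarrow> 'k::field) list \<Rightarrow> bool" where
  "cech_lin_indep S k zs \<longleftrightarrow> (\<forall>c :: nat \<Rightarrow> 'k.
      cech_zero S k (\<lambda>U \<tau>. \<Sum>i<length zs. c i * (zs ! i) U \<tau>) \<longrightarrow> (\<forall>i<length zs. c i = 0))"

text \<open>Map in Cech homology induced by the inclusion A into B (A subset of B): a cover of B
restricts to a cover of A whose nerve is a subcomplex of the nerve of the cover of B.\<close>
definition cech_inclusion_map :: "'a set \<Rightarrow> ('a set list \<Rightarrow> nat list \<Rightarrow> 'k) \<Rightarrow> ('a set list \<Rightarrow> nat list \<Rightarrow> 'k)" where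
  "cech_inclusion_map A z = (\<lambda>U. z (map (\<lambda>W. W \<inter> A) U))"

text \<open>Rank (dimension of the image, possibly infinite) of the map
H_k(A) -> H_k(B) induced by inclusion, A, B with the subspace topology of X.\<close>
definition cech_rank :: "'k::field itself \<Rightarrow> 'a topology \<Rightarrow> 'a set \<Rightarrow> 'a set \<Rightarrow> int \<Rightarrow> enat" where
  "cech_rank K X A B k = Sup {enat m | m. \<exists>zs :: ('a set list \<Rightarrow> nat list \<Rightarrow> 'k) list.
      length zs = m \<and> set zs \<subseteq> cech_elements (subtopology X A) k \<and>
      cech_lin_indep (subtopology X B) k (map (cech_inclusion_map A) zs)}"

definition vec_le :: "real^'n \<Rightarrow> real^'n \<Rightarrow> bool" where
  "vec_le u v \<longleftrightarrow> (\<forall>i. u $ i \<le> v $ i)"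

definition vec_lt :: "real^'n \<Rightarrow> real^'n \<Rightarrow> bool" where
  "vec_lt u v \<longleftrightarrow> (\<forall>i. u $ i < v $ i)"

definition sublevel :: "'a topology \<Rightarrow> ('a \<Rightarrow> real^'n) \<Rightarrow> real^'n \<Rightarrow> 'a set" where
  "sublevel X \<phi> u = {x \<in> topspace X. vec_le (\<phi> x) u}"

definition persistence_rank :: "'k::field itself \<Rightarrow> 'a topology \<Rightarrow> ('a \<Rightarrow> real^'n) \<Rightarrow> int \<Rightarrow> real^'n \<Rightarrow> real^'n \<Rightarrow> enat" where
  "persistence_rank K X \<phi> k u v = cech_rank K X (sublevel X \<phi> u) (sublevel X \<phi> v) k"

end

theory Submission
  imports Defs
begin

text \<open>The Cech groups are assembled from nerves of finite open covers, and every ingredient is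
natural in operations on covers. Restricting the covers of C to a subset A embeds each nerve into
the nerve it came from, so the map induced by A \<subseteq> C sends classes to classes and boundaries to
boundaries; pulling covers back along a homeomorphism identifies the nerves. Hence the rank of
H_k(A) \<rightarrow> H_k(B) can only grow when A is enlarged and B shrunk (keeping A \<subseteq> B), and it does not
grow under transport along a homeomorphism. Since \<phi> and \<psi> \<circ> f are h-close,
  X<\<phi> \<le> u - h> \<subseteq> X<\<psi> \<circ> f \<le> u> \<subseteq> X<\<psi> \<circ> f \<le> v> \<subseteq> X<\<phi> \<le> v + h>,
and the middle pair is the preimage under f of Y<\<psi> \<le> u> \<subseteq> Y<\<psi> \<le> v>.\<close>

section \<open>Nerves\<close>

lemma finite_nerve_simplices: "finite (nerve_simplices S U k)"
proof (rule finite_subset)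
  show "nerve_simplices S U k \<subseteq> {xs. set xs \<subseteq> {..<length U} \<and> length xs = nat (k + 1)}"
    by (auto simp: nerve_simplices_def)
  show "finite {xs. set xs \<subseteq> {..<length U} \<and> length xs = nat (k + 1)}"
    by (rule finite_lists_length_eq) simp
qed

lemma set_del_nth_subset: "set (del_nth i xs) \<subseteq> set xs"
  unfolding del_nth_def using set_take_subset set_drop_subset by fastforce

lemma nerve_simplices_mono:
  assumes "length U1 = length U2" "topspace S1 \<subseteq> topspace S2" "\<forall>i<length U1. U1 ! i \<subseteq> U2 ! i"
  shows "nerve_simplices S1 U1 j \<subseteq> nerve_simplices S2 U2 j"
proof
  fix \<sigma> assume "\<sigma> \<in> nerve_simplices S1 U1 j"
  then obtain x where "x \<in> topspace S1" "\<forall>i\<in>set \<sigma>. x \<in> U1 ! i" "\<forall>i\<in>set \<sigma>. i < length U1"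
    and "\<sigma> \<noteq> []" "int (length \<sigma>) = j + 1"
    unfolding nerve_simplices_def by blast
  moreover from this assms have "x \<in> topspace S2 \<inter> (\<Inter>i\<in>set \<sigma>. U2 ! i)"
    by fastforce
  ultimately show "\<sigma> \<in> nerve_simplices S2 U2 j"
    using assms(1) unfolding nerve_simplices_def by auto
qed

text \<open>The face only has to be known to have the right length, which membership in any nerve of
dimension k - 1 provides.\<close>

lemma nerve_simplices_del_nth:
  assumes "\<sigma> \<in> nerve_simplices S U k" "\<tau> \<in> nerve_simplices S' U' (k - 1)"
  shows "del_nth i \<sigma> = \<tau> \<Longrightarrow> \<tau> \<in> nerve_simplices S U (k - 1)"
  using assms set_del_nth_subset[of i \<sigma>] unfolding nerve_simplices_def by blast

context
  fixes S1 U1 S2 U2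
  assumes subnerve: "\<And>j. nerve_simplices S1 U1 j \<subseteq> nerve_simplices S2 U2 j"
begin

lemma chains_subnerve: "chains S1 U1 j \<subseteq> chains S2 U2 j"
  using subnerve unfolding chains_def by blast

lemma boundary_subnerve:
  assumes c: "c \<in> chains S1 U1 k"
  shows "boundary S1 U1 k c = boundary S2 U2 k c"
proof
  fix \<tau>
  define I1 where "I1 = {(\<sigma>, i). \<sigma> \<in> nerve_simplices S1 U1 k \<and> i < length \<sigma> \<and> del_nth i \<sigma> = \<tau>}"
  define I2 where "I2 = {(\<sigma>, i). \<sigma> \<in> nerve_simplices S2 U2 k \<and> i < length \<sigma> \<and> del_nth i \<sigma> = \<tau>}"
  define t where "t = (\<lambda>(\<sigma>, i). (-1) ^ i * c \<sigma>)"
  have "finite I2"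
    by (rule finite_subset[of _ "Sigma (nerve_simplices S2 U2 k) (\<lambda>\<sigma>. {..<length \<sigma>})"])
       (auto simp: I2_def finite_nerve_simplices)
  moreover have "I1 \<subseteq> I2"
    using subnerve by (auto simp: I1_def I2_def)
  moreover have "\<forall>x\<in>I2 - I1. t x = 0"
    using c by (auto simp: I1_def I2_def t_def chains_def)
  ultimately have sums: "sum t I1 = sum t I2"
    by (rule sum.mono_neutral_left)
  have "I1 = {}" if "\<tau> \<notin> nerve_simplices S1 U1 (k - 1)" "\<tau> \<in> nerve_simplices S2 U2 (k - 1)"
    using that nerve_simplices_del_nth by (fastforce simp: I1_def)
  then show "boundary S1 U1 k c \<tau> = boundary S2 U2 k c \<tau>"
    using subnerve sums unfolding boundary_def I1_def[symmetric] I2_def[symmetric] t_def[symmetric]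
    by auto
qed

lemma cycles_subnerve: "cycles S1 U1 k \<subseteq> cycles S2 U2 k"
  using chains_subnerve boundary_subnerve unfolding cycles_def by fastforce

lemma boundaries_subnerve: "boundaries S1 U1 k \<subseteq> boundaries S2 U2 k"
  using chains_subnerve boundary_subnerve unfolding boundaries_def by fastforce

lemma chain_map_subnerve:
  assumes c: "c \<in> chains S1 U1 k"
  shows "chain_map S1 U1 k g c = chain_map S2 U2 k g c"
proof
  fix \<tau>
  have "finite {\<sigma> \<in> nerve_simplices S2 U2 k. map g \<sigma> = \<tau>}"
    by (rule finite_subset[OF _ finite_nerve_simplices]) auto
  moreover have "{\<sigma> \<in> nerve_simplices S1 U1 k. map g \<sigma> = \<tau>} \<subseteq> {\<sigma> \<in> nerve_simplices S2 U2 k. map g \<sigma> = \<tau>}"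
    using subnerve by auto
  moreover have "\<forall>\<sigma>\<in>{\<sigma> \<in> nerve_simplices S2 U2 k. map g \<sigma> = \<tau>} - {\<sigma> \<in> nerve_simplices S1 U1 k. map g \<sigma> = \<tau>}. c \<sigma> = 0"
    using c by (auto simp: chains_def)
  ultimately show "chain_map S1 U1 k g c \<tau> = chain_map S2 U2 k g c \<tau>"
    unfolding chain_map_def by (rule sum.mono_neutral_left)
qed

end

section \<open>Maps induced by inclusions\<close>

lemma open_cover_restrict:
  assumes "A \<subseteq> C" "open_cover (subtopology X C) U"
  shows "open_cover (subtopology X A) (map (\<lambda>W. W \<inter> A) U)"
proof -
  have "openin (subtopology X A) (W \<inter> A)" if "W \<in> set U" for W
  proof -
    from assms(2) that obtain T where "openin X T" "W = T \<inter> C"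
      by (auto simp: open_cover_def openin_subtopology)
    with assms(1) show ?thesis
      by (auto simp: openin_subtopology)
  qed
  with assms show ?thesis
    by (auto simp: open_cover_def)
qed

lemma nerve_simplices_restrict_subset:
  "A \<subseteq> C \<Longrightarrow>
    nerve_simplices (subtopology X A) (map (\<lambda>W. W \<inter> A) U) j \<subseteq> nerve_simplices (subtopology X C) U j"
  by (rule nerve_simplices_mono) auto

lemma cech_inclusion_map_elements:
  assumes AC: "A \<subseteq> C" and z: "z \<in> cech_elements (subtopology X A) k"
  shows "cech_inclusion_map A z \<in> cech_elements (subtopology X C) k"
  unfolding cech_elements_def mem_Collect_eq
proof (intro conjI allI impI)
  note subnerve = nerve_simplices_restrict_subset[OF AC]
  fix U assume "open_cover (subtopology X C) U"
  then have "z (map (\<lambda>W. W \<inter> A) U) \<in> cycles (subtopology X A) (map (\<lambda>W. W \<inter> A) U) k"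
    using z open_cover_restrict[OF AC] by (auto simp: cech_elements_def)
  then show "cech_inclusion_map A z U \<in> cycles (subtopology X C) U k"
    using cycles_subnerve[OF subnerve] by (auto simp: cech_inclusion_map_def)
next
  note subnerve = nerve_simplices_restrict_subset[OF AC]
  fix U V g
  assume UVg: "open_cover (subtopology X C) U \<and> open_cover (subtopology X C) V \<and> refines_via V U g"
  let ?U = "map (\<lambda>W. W \<inter> A) U" and ?V = "map (\<lambda>W. W \<inter> A) V"
  have covers: "open_cover (subtopology X A) ?U" "open_cover (subtopology X A) ?V"
    using UVg open_cover_restrict[OF AC] by blast+
  moreover have "refines_via ?V ?U g"
    using UVg by (auto simp: refines_via_def)
  ultimately have "(\<lambda>\<tau>. chain_map (subtopology X A) ?V k g (z ?V) \<tau> - z ?U \<tau>)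
      \<in> boundaries (subtopology X A) ?U k"
    using z unfolding cech_elements_def by blast
  moreover have "z ?V \<in> chains (subtopology X A) ?V k"
    using z covers unfolding cech_elements_def cycles_def by blast
  then have "chain_map (subtopology X A) ?V k g (z ?V) = chain_map (subtopology X C) V k g (z ?V)"
    by (rule chain_map_subnerve[OF subnerve])
  ultimately show "(\<lambda>\<tau>. chain_map (subtopology X C) V k g (cech_inclusion_map A z V) \<tau>
      - cech_inclusion_map A z U \<tau>) \<in> boundaries (subtopology X C) U k"
    using boundaries_subnerve[OF subnerve] by (auto simp: cech_inclusion_map_def)
qed

lemma cech_zero_inclusion_map:
  assumes AC: "A \<subseteq> C" and w: "cech_zero (subtopology X A) k w"
  shows "cech_zero (subtopology X C) k (cech_inclusion_map A w)"
  unfolding cech_zero_def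
proof (intro allI impI)
  fix U assume "open_cover (subtopology X C) U"
  then have "w (map (\<lambda>W. W \<inter> A) U) \<in> boundaries (subtopology X A) (map (\<lambda>W. W \<inter> A) U) k"
    using w open_cover_restrict[OF AC] unfolding cech_zero_def by blast
  then show "cech_inclusion_map A w U \<in> boundaries (subtopology X C) U k"
    using boundaries_subnerve[OF nerve_simplices_restrict_subset[OF AC]]
    by (auto simp: cech_inclusion_map_def)
qed

lemma cech_rank_le_by_map:
  fixes T :: "('a set list \<Rightarrow> nat list \<Rightarrow> 'k::field) \<Rightarrow> ('b set list \<Rightarrow> nat list \<Rightarrow> 'k)"
  assumes elements:
      "\<And>z. z \<in> cech_elements (subtopology X A) k \<Longrightarrow> T z \<in> cech_elements (subtopology Y A') k"
    and lin_indep: "\<And>zs. cech_lin_indep (subtopology X B) k (map (cech_inclusion_map A) zs) \<Longrightarrow>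
      cech_lin_indep (subtopology Y B') k (map (cech_inclusion_map A') (map T zs))"
  shows "cech_rank TYPE('k) X A B k \<le> cech_rank TYPE('k) Y A' B' k"
  unfolding cech_rank_def
proof (rule Sup_subset_mono, rule subsetI)
  fix e
  assume "e \<in> {enat m |m. \<exists>zs :: ('a set list \<Rightarrow> nat list \<Rightarrow> 'k) list. length zs = m \<and>
      set zs \<subseteq> cech_elements (subtopology X A) k \<and>
      cech_lin_indep (subtopology X B) k (map (cech_inclusion_map A) zs)}"
  then obtain zs :: "('a set list \<Rightarrow> nat list \<Rightarrow> 'k) list" where "e = enat (length zs)"
    and "set zs \<subseteq> cech_elements (subtopology X A) k"
    and "cech_lin_indep (subtopology X B) k (map (cech_inclusion_map A) zs)"
    by blast
  with elements lin_indep show "e \<in> {enat m |m. \<exists>zs :: ('b set list \<Rightarrow> nat list \<Rightarrow> 'k) list.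
      length zs = m \<and> set zs \<subseteq> cech_elements (subtopology Y A') k \<and>
      cech_lin_indep (subtopology Y B') k (map (cech_inclusion_map A') zs)}"
    by (intro CollectI exI[of _ "length zs"] conjI exI[of _ "map T zs"]) auto
qed

lemma cech_rank_le_of_nested:
  assumes "A \<subseteq> A'" "A' \<subseteq> B'" "B' \<subseteq> B"
  shows "cech_rank TYPE('k::field) X A B k \<le> cech_rank TYPE('k) X A' B' k"
proof (rule cech_rank_le_by_map[where T = "cech_inclusion_map A"])
  show "cech_inclusion_map A z \<in> cech_elements (subtopology X A') k"
    if "z \<in> cech_elements (subtopology X A) k" for z :: "'a set list \<Rightarrow> nat list \<Rightarrow> 'k"
    using cech_inclusion_map_elements[OF assms(1) that] .
next
  fix zs :: "('a set list \<Rightarrow> nat list \<Rightarrow> 'k) list"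
  assume indep: "cech_lin_indep (subtopology X B) k (map (cech_inclusion_map A) zs)"
  show "cech_lin_indep (subtopology X B') k
      (map (cech_inclusion_map A') (map (cech_inclusion_map A) zs))"
    unfolding cech_lin_indep_def
  proof (rule allI, rule impI)
    fix c :: "nat \<Rightarrow> 'k"
    let ?zs' = "map (cech_inclusion_map A') (map (cech_inclusion_map A) zs)"
    let ?w = "\<lambda>U \<tau>. \<Sum>i<length ?zs'. c i * (?zs' ! i) U \<tau>"
    assume "cech_zero (subtopology X B') k ?w"
    then have "cech_zero (subtopology X B) k (cech_inclusion_map B' ?w)"
      by (rule cech_zero_inclusion_map[OF assms(3)])
    moreover have "cech_inclusion_map B' ?w
        = (\<lambda>U \<tau>. \<Sum>i<length zs. c i * (map (cech_inclusion_map A) zs ! i) U \<tau>)"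
    proof -
      have "B' \<inter> (A' \<inter> A) = A"
        using assms(1,2) by auto
      then show ?thesis
        by (simp add: cech_inclusion_map_def o_def Int_assoc)
    qed
    ultimately show "\<forall>i<length ?zs'. c i = 0"
      using indep unfolding cech_lin_indep_def by simp
  qed
qed

section \<open>Transport along a homeomorphism\<close>

definition preimage_in :: "'a topology \<Rightarrow> ('a \<Rightarrow> 'b) \<Rightarrow> 'b set \<Rightarrow> 'a set" where
  "preimage_in X f W = {x \<in> topspace X. f x \<in> W}"

lemma preimage_in_Int: "preimage_in X f (W \<inter> A) = preimage_in X f W \<inter> preimage_in X f A"
  by (auto simp: preimage_in_def)

context
  fixes X :: "'a topology" and Y :: "'b topology" and f :: "'a \<Rightarrow> 'b"
  assumes hf: "homeomorphic_map X Y f"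
begin

lemma image_topspace: "f ` topspace X = topspace Y"
  using homeomorphic_imp_surjective_map[OF hf] .

lemma image_preimage_in: "f ` preimage_in X f W = topspace Y \<inter> W"
proof
  show "f ` preimage_in X f W \<subseteq> topspace Y \<inter> W"
    using image_topspace by (auto simp: preimage_in_def)
  show "topspace Y \<inter> W \<subseteq> f ` preimage_in X f W"
  proof
    fix y assume y: "y \<in> topspace Y \<inter> W"
    then obtain x where "x \<in> topspace X" "y = f x"
      using image_topspace by (metis IntD1 imageE)
    with y show "y \<in> f ` preimage_in X f W"
      by (auto simp: preimage_in_def)
  qed
qed

lemma preimage_in_eq_empty_iff: "preimage_in X f W = {} \<longleftrightarrow> topspace Y \<inter> W = {}"
  by (simp only: image_preimage_in[symmetric] image_is_empty)

lemma preimage_in_image: "W \<subseteq> topspace X \<Longrightarrow> preimage_in X f (f ` W) = W"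
  using homeomorphic_imp_injective_map[OF hf] by (auto simp: preimage_in_def inj_on_def)

lemma homeomorphic_map_subtopology_preimage_in:
  "homeomorphic_map (subtopology X (preimage_in X f C)) (subtopology Y C) f"
  by (rule homeomorphic_map_subtopologies_alt[OF hf]) (auto simp: preimage_in_def)

lemma nerve_simplices_preimage_in:
  "nerve_simplices (subtopology X (preimage_in X f C)) (map (preimage_in X f) U) j
    = nerve_simplices (subtopology Y C) U j"
proof -
  have "topspace X \<inter> preimage_in X f C \<inter> (\<Inter>i\<in>set \<sigma>. map (preimage_in X f) U ! i) \<noteq> {}
      \<longleftrightarrow> topspace Y \<inter> C \<inter> (\<Inter>i\<in>set \<sigma>. U ! i) \<noteq> {}"
    if "\<forall>i\<in>set \<sigma>. i < length U" for \<sigma>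
  proof -
    have "topspace X \<inter> preimage_in X f C \<inter> (\<Inter>i\<in>set \<sigma>. map (preimage_in X f) U ! i)
        = preimage_in X f (C \<inter> (\<Inter>i\<in>set \<sigma>. U ! i))"
      using that by (auto simp: preimage_in_def)
    then show ?thesis
      by (simp add: preimage_in_eq_empty_iff Int_assoc)
  qed
  then show ?thesis
    unfolding nerve_simplices_def topspace_subtopology length_map
    by (intro Collect_cong) blast
qed

lemma open_cover_preimage_in:
  assumes U: "open_cover (subtopology Y C) U"
  shows "open_cover (subtopology X (preimage_in X f C)) (map (preimage_in X f) U)"
proof -
  note cont = homeomorphic_imp_continuous_map[OF homeomorphic_map_subtopology_preimage_in]
  have "openin (subtopology X (preimage_in X f C)) (preimage_in X f W)" if "W \<in> set U" for W
  proof -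
    have W: "openin (subtopology Y C) W"
      using U that by (auto simp: open_cover_def)
    then have "W \<subseteq> C"
      using openin_subset by fastforce
    then have "preimage_in X f W
        = {x \<in> topspace (subtopology X (preimage_in X f C)). f x \<in> W}"
      by (auto simp: preimage_in_def)
    then show ?thesis
      using openin_continuous_map_preimage[OF cont W] by simp
  qed
  moreover have "topspace X \<inter> preimage_in X f C \<subseteq> \<Union> (set (map (preimage_in X f) U))"
  proof
    fix x assume x: "x \<in> topspace X \<inter> preimage_in X f C"
    then have "f x \<in> topspace Y \<inter> C"
      using image_topspace by (auto simp: preimage_in_def)
    then obtain W where "W \<in> set U" "f x \<in> W"
      using U by (auto simp: open_cover_def)
    with x show "x \<in> \<Union> (set (map (preimage_in X f) U))"
      by (auto simp: preimage_in_def)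
  qed
  ultimately show ?thesis
    by (auto simp: open_cover_def)
qed

lemma open_cover_image:
  assumes U: "open_cover (subtopology X (preimage_in X f C)) U"
  shows "open_cover (subtopology Y C) (map ((`) f) U)"
proof -
  note homeo = homeomorphic_map_subtopology_preimage_in
  have "openin (subtopology Y C) (f ` W)" if "W \<in> set U" for W
  proof -
    have "openin (subtopology X (preimage_in X f C)) W"
      using U that by (simp add: open_cover_def)
    with homeomorphic_map_openness[OF homeo openin_subset[OF this]] show ?thesis
      by simp
  qed
  moreover have "topspace X \<inter> preimage_in X f C \<subseteq> \<Union> (set U)"
    using U by (simp add: open_cover_def)
  then have "f ` preimage_in X f C \<subseteq> f ` \<Union> (set U)"
    by (intro image_mono) (auto simp: preimage_in_def)
  then have "topspace Y \<inter> C \<subseteq> \<Union> (set (map ((`) f) U))"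
    by (simp add: image_preimage_in image_Union)
  ultimately show ?thesis
    by (auto simp: open_cover_def)
qed

lemma preimage_in_open_cover_image:
  assumes "open_cover (subtopology X (preimage_in X f C)) U"
  shows "map (preimage_in X f) (map ((`) f) U) = U"
proof -
  have "W \<subseteq> topspace X" if "W \<in> set U" for W
  proof -
    have "openin (subtopology X (preimage_in X f C)) W"
      using assms that by (simp add: open_cover_def)
    then have "W \<subseteq> topspace (subtopology X (preimage_in X f C))"
      by (rule openin_subset)
    then show ?thesis
      by simp
  qed
  then show ?thesis
    by (simp add: map_idI preimage_in_image)
qed

lemma cech_elements_preimage_in:
  assumes z: "z \<in> cech_elements (subtopology X (preimage_in X f A)) k"
  shows "(\<lambda>U. z (map (preimage_in X f) U)) \<in> cech_elements (subtopology Y A) k"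
  unfolding cech_elements_def mem_Collect_eq
proof (intro conjI allI impI)
  note subnerve = equalityD1[OF nerve_simplices_preimage_in]
  fix U assume "open_cover (subtopology Y A) U"
  then have "z (map (preimage_in X f) U)
      \<in> cycles (subtopology X (preimage_in X f A)) (map (preimage_in X f) U) k"
    using z open_cover_preimage_in unfolding cech_elements_def by blast
  then show "z (map (preimage_in X f) U) \<in> cycles (subtopology Y A) U k"
    using cycles_subnerve[OF subnerve] by blast
next
  note subnerve = equalityD1[OF nerve_simplices_preimage_in]
  fix U V g
  assume UVg: "open_cover (subtopology Y A) U \<and> open_cover (subtopology Y A) V \<and> refines_via V U g"
  let ?U = "map (preimage_in X f) U" and ?V = "map (preimage_in X f) V"
  have covers: "open_cover (subtopology X (preimage_in X f A)) ?U"
      "open_cover (subtopology X (preimage_in X f A)) ?V"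
    using UVg open_cover_preimage_in by blast+
  moreover have "refines_via ?V ?U g"
    using UVg by (auto simp: refines_via_def preimage_in_def)
  ultimately have "(\<lambda>\<tau>. chain_map (subtopology X (preimage_in X f A)) ?V k g (z ?V) \<tau> - z ?U \<tau>)
      \<in> boundaries (subtopology X (preimage_in X f A)) ?U k"
    using z unfolding cech_elements_def by blast
  moreover have "z ?V \<in> chains (subtopology X (preimage_in X f A)) ?V k"
    using z covers unfolding cech_elements_def cycles_def by blast
  then have "chain_map (subtopology X (preimage_in X f A)) ?V k g (z ?V)
      = chain_map (subtopology Y A) V k g (z ?V)"
    by (rule chain_map_subnerve[OF subnerve])
  ultimately show "(\<lambda>\<tau>. chain_map (subtopology Y A) V k g (z ?V) \<tau> - z ?U \<tau>)
      \<in> boundaries (subtopology Y A) U k"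
    using boundaries_subnerve[OF subnerve] by auto
qed

text \<open>Every cover of the preimage is the pullback of its image cover.\<close>

lemma cech_zero_of_cech_zero_preimage_in:
  assumes w: "cech_zero (subtopology Y B) k (\<lambda>U. w (map (preimage_in X f) U))"
  shows "cech_zero (subtopology X (preimage_in X f B)) k w"
  unfolding cech_zero_def
proof (intro allI impI)
  fix U assume U: "open_cover (subtopology X (preimage_in X f B)) U"
  let ?U' = "map ((`) f) U"
  have "w (map (preimage_in X f) ?U') \<in> boundaries (subtopology Y B) ?U' k"
    using w open_cover_image[OF U] unfolding cech_zero_def by blast
  then have "w (map (preimage_in X f) ?U')
      \<in> boundaries (subtopology X (preimage_in X f B)) (map (preimage_in X f) ?U') k"
    using boundaries_subnerve[OF equalityD2[OF nerve_simplices_preimage_in]] by blast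
  then show "w U \<in> boundaries (subtopology X (preimage_in X f B)) U k"
    by (simp only: preimage_in_open_cover_image[OF U])
qed

lemma cech_rank_preimage_in_le:
  "cech_rank TYPE('k::field) X (preimage_in X f A) (preimage_in X f B) k
    \<le> cech_rank TYPE('k) Y A B k"
proof (rule cech_rank_le_by_map[where T = "\<lambda>z U. z (map (preimage_in X f) U)"])
  show "(\<lambda>U. z (map (preimage_in X f) U)) \<in> cech_elements (subtopology Y A) k"
    if "z \<in> cech_elements (subtopology X (preimage_in X f A)) k"
    for z :: "'a set list \<Rightarrow> nat list \<Rightarrow> 'k"
    using cech_elements_preimage_in[OF that] .
next
  fix zs :: "('a set list \<Rightarrow> nat list \<Rightarrow> 'k) list"
  let ?zs' = "map (cech_inclusion_map A) (map (\<lambda>z U. z (map (preimage_in X f) U)) zs)"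
  assume indep: "cech_lin_indep (subtopology X (preimage_in X f B)) k
    (map (cech_inclusion_map (preimage_in X f A)) zs)"
  show "cech_lin_indep (subtopology Y B) k ?zs'"
    unfolding cech_lin_indep_def
  proof (rule allI, rule impI)
    fix c :: "nat \<Rightarrow> 'k"
    let ?v = "\<lambda>U \<tau>. \<Sum>i<length zs. c i * (map (cech_inclusion_map (preimage_in X f A)) zs ! i) U \<tau>"
    assume "cech_zero (subtopology Y B) k (\<lambda>U \<tau>. \<Sum>i<length ?zs'. c i * (?zs' ! i) U \<tau>)"
    moreover have "(\<lambda>U \<tau>. \<Sum>i<length ?zs'. c i * (?zs' ! i) U \<tau>) = (\<lambda>U. ?v (map (preimage_in X f) U))"
      by (simp add: cech_inclusion_map_def preimage_in_Int o_def)
    ultimately have "cech_zero (subtopology X (preimage_in X f B)) k ?v"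
      by (simp add: cech_zero_of_cech_zero_preimage_in)
    then show "\<forall>i<length ?zs'. c i = 0"
      using indep unfolding cech_lin_indep_def by simp
  qed
qed

end

lemma sublevel_mono: "vec_le u v \<Longrightarrow> sublevel X \<phi> u \<subseteq> sublevel X \<phi> v"
  by (auto simp: sublevel_def vec_le_def intro: order_trans)

lemma vec_le_if_vec_lt: "vec_lt u v \<Longrightarrow> vec_le u v"
  by (simp add: vec_le_def vec_lt_def less_imp_le)

lemma sublevel_subset_if_infnorm_le:
  fixes \<phi> \<psi> :: "'a \<Rightarrow> real^'n"
  assumes close: "\<forall>x\<in>topspace X. infnorm (\<phi> x - \<psi> x) \<le> h"
  shows "sublevel X \<phi> (u - vec h) \<subseteq> sublevel X \<psi> u"
proof
  fix x assume x: "x \<in> sublevel X \<phi> (u - vec h)"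
  have "\<psi> x $ i \<le> u $ i" for i
  proof -
    have "\<psi> x $ i - \<phi> x $ i \<le> infnorm (\<phi> x - \<psi> x)"
      using component_le_infnorm_cart[of "\<phi> x - \<psi> x" i] by simp
    moreover have "infnorm (\<phi> x - \<psi> x) \<le> h" and "\<phi> x $ i \<le> u $ i - h"
      using close x by (auto simp: sublevel_def vec_le_def)
    ultimately show ?thesis
      by linarith
  qed
  with x show "x \<in> sublevel X \<psi> u"
    by (simp add: sublevel_def vec_le_def)
qed

lemma preimage_in_sublevel:
  "f ` topspace X \<subseteq> topspace Y \<Longrightarrow> preimage_in X f (sublevel Y \<psi> u) = sublevel X (\<psi> \<circ> f) u"
  by (auto simp: preimage_in_def sublevel_def)

theorem mainTheorem5:
  fixes X :: "'a topology" and Y :: "'b topology" and f :: "'a \<Rightarrow> 'b"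
    and \<phi> :: "'a \<Rightarrow> real^'n" and \<psi> :: "'b \<Rightarrow> real^'n"
    and k :: int and h :: real and u v :: "real^'n"
  assumes "triangulable X" and "triangulable Y"
    and "homeomorphic_map X Y f"
    and "continuous_map X euclidean \<phi>" and "continuous_map Y euclidean \<psi>"
    and "\<forall>x\<in>topspace X. infnorm (\<phi> x - \<psi> (f x)) \<le> h"
    and "vec_lt u v"
  shows "persistence_rank TYPE('k::field) X \<phi> k (u - vec h) (v + vec h)
           \<le> persistence_rank TYPE('k) Y \<psi> k u v"
proof -
  have close: "\<forall>x\<in>topspace X. infnorm (\<phi> x - (\<psi> \<circ> f) x) \<le> h"
    and close': "\<forall>x\<in>topspace X. infnorm ((\<psi> \<circ> f) x - \<phi> x) \<le> h"
    using assms(6) by (simp_all add: infnorm_sub)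
  have "sublevel X \<phi> (u - vec h) \<subseteq> sublevel X (\<psi> \<circ> f) u"
    using close by (rule sublevel_subset_if_infnorm_le)
  moreover have "sublevel X (\<psi> \<circ> f) u \<subseteq> sublevel X (\<psi> \<circ> f) v"
    using assms(7) by (intro sublevel_mono vec_le_if_vec_lt)
  moreover have "sublevel X (\<psi> \<circ> f) v \<subseteq> sublevel X \<phi> (v + vec h)"
    using sublevel_subset_if_infnorm_le[OF close', of "v + vec h"] by (simp add: o_def)
  ultimately have "persistence_rank TYPE('k) X \<phi> k (u - vec h) (v + vec h)
      \<le> cech_rank TYPE('k) X (sublevel X (\<psi> \<circ> f) u) (sublevel X (\<psi> \<circ> f) v) k"
    unfolding persistence_rank_def by (rule cech_rank_le_of_nested)
  also have "\<dots> = cech_rank TYPE('k) X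
      (preimage_in X f (sublevel Y \<psi> u)) (preimage_in X f (sublevel Y \<psi> v)) k"
    using continuous_map_image_subset_topspace[OF homeomorphic_imp_continuous_map[OF assms(3)]]
    by (simp add: preimage_in_sublevel)
  also have "\<dots> \<le> persistence_rank TYPE('k) Y \<psi> k u v"
    unfolding persistence_rank_def by (rule cech_rank_preimage_in_le[OF assms(3)])
  finally show ?thesis .
qed

end
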